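(* Let $q\ge2$ be a fixed even integer. For every $n$ there exists a code $\mathcal{C}\subseteq\Sigma_q^n$ capable of correcting a reverse-complement duplication of arbitrary length (i.e. $RC_k^1(\boldsymbol{x})\cap RC_k^1(\boldsymbol{z})=\varnothing$ for all distinct $\boldsymbol{x},\boldsymbol{z}\in\mathcal{C}$ and all $k\ge1$) with redundancy $n-\log_q|\mathcal{C}|\le 2\log_q n+\log_q\log_q n+O(1)$; in particular the asymptotic rate $\log_q|\mathcal{C}|/n$ tends to $1$.
   Context: $\Sigma_q=\{0,\dots,q-1\}$. A complement operation is a fixed bijection $a\mapsto\overline{a}$ on $\Sigma_q$ with $\overline{a}\ne a$, $\overline{\overline{a}}=a$; $\boldsymbol{v}^{RC}=\overline{v_k}\cdots\overline{v_1}$ for $\boldsymbol{v}=v_1\cdots v_k$. For $\boldsymbol{x}=\boldsymbol{u}\boldsymbol{v}\boldsymbol{w}\in\Sigma_q^n$ with $|\boldsymbol{u}|=i-1$, $|\boldsymbol{v}|=k$, $RC_{k,i}(\boldsymbol{x})=\boldsymbol{u}\boldsymbol{v}\boldsymbol{v}^{RC}\boldsymbol{w}$, and $RC_k^1(\boldsymbol{x})=\{RC_{k,i}(\boldsymbol{x}):i\in[1,n-k+1]\}$ (empty if $k>n$). The $O(1)$ term depends only on $q$. *)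

theory Defs
  imports Complex_Main
begin

definition complement_op :: "nat \<Rightarrow> (nat \<Rightarrow> nat) \<Rightarrow> bool" where
  "complement_op q cmp \<longleftrightarrow>
     (\<forall>a<q. cmp a < q \<and> cmp a \<noteq> a \<and> cmp (cmp a) = a)"

definition words :: "nat \<Rightarrow> nat \<Rightarrow> nat list set" where
  "words q n = {x. length x = n \<and> (\<forall>a\<in>set x. a < q)}"

definition rc :: "(nat \<Rightarrow> nat) \<Rightarrow> nat list \<Rightarrow> nat list" where
  "rc cmp v = rev (map cmp v)"

definition RC_dup :: "(nat \<Rightarrow> nat) \<Rightarrow> nat \<Rightarrow> nat \<Rightarrow> nat list \<Rightarrow> nat list" where
  "RC_dup cmp k i x =
     (let u = take (i - 1) x; v = take k (drop (i - 1) x); w = drop (i - 1 + k) x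
      in u @ v @ rc cmp v @ w)"

definition RC_ball :: "(nat \<Rightarrow> nat) \<Rightarrow> nat \<Rightarrow> nat list \<Rightarrow> nat list set" where
  "RC_ball cmp k x =
     (if k > length x then {} else {RC_dup cmp k i x | i. 1 \<le> i \<and> i \<le> length x - k + 1})"

definition corrects_RC_dup :: "(nat \<Rightarrow> nat) \<Rightarrow> nat list set \<Rightarrow> bool" where
  "corrects_RC_dup cmp C \<longleftrightarrow>
     (\<forall>x\<in>C. \<forall>z\<in>C. x \<noteq> z \<longrightarrow> (\<forall>k\<ge>1. RC_ball cmp k x \<inter> RC_ball cmp k z = {}))"

end

(*
  A word is m-free if it contains no factor v v^RC with |v| = m. A union bound over the n + 1
  possible centres of such a factor shows that, once 2 (n + 1) <= q^m, at least half of the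
  q^n words of length n are m-free; the least such m is O(log_q n).

  Suppose a duplication of length k >= 4 m turns two m-free words x and u into the same word y.
  Then y carries factors v v^RC with |v| = k centred at two positions c < c', and deleting the
  copy after c (resp. c') gives x (resp. u). If c' - c >= m, the factor at c survives with
  radius m in u. Otherwise the two reflections make y locally periodic with period 2 (c' - c),
  and a translate of the factor at c, shifted left by a multiple of the period, survives with
  radius m in x. So two distinct m-free words can only be confused by duplications of length
  k < 4 m; each is confusable with at most 4 m n^2 others, and a greedy independent set of
  m-free words is a code of size at least q^n / (2 (4 m n^2 + 1)). Taking logarithms gives
  redundancy 2 log_q n + log_q log_q n + O(1).
*)

theory Submission
  imports Defs "HOL-Real_Asymp.Real_Asymp"
begin

(* w = u v v^RC w' with |v| = r and |u v| = c *)
definition rc_pal_at :: "(nat \<Rightarrow> nat) \<Rightarrow> nat list \<Rightarrow> nat \<Rightarrow> nat \<Rightarrow> bool" where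
  "rc_pal_at cmp w c r \<longleftrightarrow>
     r \<le> c \<and> c + r \<le> length w \<and> (\<forall>t<r. w ! (c + t) = cmp (w ! (c - 1 - t)))"

definition rc_pal_free :: "(nat \<Rightarrow> nat) \<Rightarrow> nat \<Rightarrow> nat list \<Rightarrow> bool" where
  "rc_pal_free cmp r w \<longleftrightarrow> (\<forall>c. \<not> rc_pal_at cmp w c r)"

lemma rc_pal_at_iff_take_drop:
  "rc_pal_at cmp w c r \<longleftrightarrow>
     r \<le> c \<and> c + r \<le> length w \<and> take r (drop c w) = rc cmp (take r (drop (c - r) w))"
proof -
  have "take r (drop c w) = rc cmp (take r (drop (c - r) w)) \<longleftrightarrow>
        (\<forall>t<r. w ! (c + t) = cmp (w ! (c - 1 - t)))" if "r \<le> c" "c + r \<le> length w"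
  proof -
    have "rc cmp (take r (drop (c - r) w)) ! t = cmp (w ! (c - 1 - t))" if "t < r" for t
      using that \<open>r \<le> c\<close> \<open>c + r \<le> length w\<close> by (simp add: rc_def rev_nth)
    then show ?thesis
      using that by (simp add: list_eq_iff_nth_eq rc_def)
  qed
  then show ?thesis
    unfolding rc_pal_at_def by blast
qed

lemma words_eq_lists: "words q n = {xs. set xs \<subseteq> {..<q} \<and> length xs = n}"
  unfolding words_def by auto

lemma finite_words: "finite (words q n)"
  by (simp add: words_eq_lists finite_lists_length_eq)

lemma card_words: "card (words q n) = q ^ n"
  by (simp add: words_eq_lists card_lists_length_eq)

lemma card_rc_pal_at_le: "card {x \<in> words q n. rc_pal_at cmp x c r} \<le> q ^ (n - r)"
proof -
  let ?A = "{x \<in> words q n. rc_pal_at cmp x c r}"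
  let ?f = "\<lambda>x. take c x @ drop (c + r) x"
  let ?g = "\<lambda>w. take c w @ rc cmp (take r (drop (c - r) (take c w))) @ drop c w"
  have "?g (?f x) = x" if "x \<in> ?A" for x
  proof -
    have "r \<le> c" "c + r \<le> length x" and pal: "take r (drop c x) = rc cmp (take r (drop (c - r) x))"
      using that by (auto simp: rc_pal_at_iff_take_drop)
    have "x = take c x @ take r (drop c x) @ drop (c + r) x"
      by (metis append.assoc append_take_drop_id take_add)
    also have "take r (drop c x) = rc cmp (take r (drop (c - r) (take c x)))"
      using pal \<open>r \<le> c\<close> by (simp add: take_drop)
    finally show ?thesis
      using \<open>c + r \<le> length x\<close> by simp
  qed
  then have "inj_on ?f ?A"
    by (rule inj_on_inverseI)
  moreover have "?f ` ?A \<subseteq> words q (n - r)"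
    by (auto simp: words_def rc_pal_at_def dest!: in_set_takeD in_set_dropD)
  ultimately have "card ?A \<le> card (words q (n - r))"
    using finite_words by (rule card_inj_on_le)
  then show ?thesis
    by (simp add: card_words)
qed

lemma card_not_rc_pal_free:
  "q ^ r * card {x \<in> words q n. \<not> rc_pal_free cmp r x} \<le> (n + 1) * q ^ n"
proof (cases "r \<le> n")
  case True
  have "{x \<in> words q n. \<not> rc_pal_free cmp r x} \<subseteq> (\<Union>c\<le>n. {x \<in> words q n. rc_pal_at cmp x c r})"
  proof
    fix x
    assume "x \<in> {x \<in> words q n. \<not> rc_pal_free cmp r x}"
    then obtain c where "x \<in> words q n" "rc_pal_at cmp x c r"
      by (auto simp: rc_pal_free_def)
    moreover from this have "c \<le> n"
      by (simp add: rc_pal_at_def words_def)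
    ultimately show "x \<in> (\<Union>c\<le>n. {x \<in> words q n. rc_pal_at cmp x c r})"
      by blast
  qed
  then have "card {x \<in> words q n. \<not> rc_pal_free cmp r x}
      \<le> card (\<Union>c\<le>n. {x \<in> words q n. rc_pal_at cmp x c r})"
    by (simp add: card_mono finite_words)
  also have "\<dots> \<le> (\<Sum>c\<le>n. card {x \<in> words q n. rc_pal_at cmp x c r})"
    by (rule card_UN_le) simp
  also have "\<dots> \<le> (n + 1) * q ^ (n - r)"
    using sum_mono[of "{..n}" _ "\<lambda>_. q ^ (n - r)"] card_rc_pal_at_le by simp
  finally have "q ^ r * card {x \<in> words q n. \<not> rc_pal_free cmp r x}
      \<le> q ^ r * ((n + 1) * q ^ (n - r))"
    by (rule mult_le_mono2)
  also have "\<dots> = (n + 1) * q ^ n"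
    using True by (metis le_add_diff_inverse mult.left_commute power_add)
  finally show ?thesis .
next
  case False
  then have "{x \<in> words q n. \<not> rc_pal_free cmp r x} = {}"
    by (auto simp: rc_pal_free_def rc_pal_at_def words_def)
  then show ?thesis
    by (simp only: card.empty)
qed

lemma exists_large_independent_subset:
  assumes "finite V"
    and "\<And>v. v \<in> V \<Longrightarrow> card {u \<in> V. R v u} \<le> D"
    and "\<And>x z. R x z \<Longrightarrow> R z x"
  shows "\<exists>C\<subseteq>V. card V \<le> (D + 1) * card C \<and> (\<forall>x\<in>C. \<forall>z\<in>C. x \<noteq> z \<longrightarrow> \<not> R x z)"
  using assms(1,2)
proof (induction V rule: finite_psubset_induct)
  case (psubset V)
  show ?case
  proof (cases "V = {}")
    case False
    then obtain v where "v \<in> V"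
      by blast
    define N where "N = insert v {u \<in> V. R v u}"
    define W where "W = V - N"
    have W_degree: "card {u \<in> W. R w u} \<le> D" if "w \<in> W" for w
    proof -
      have "card {u \<in> W. R w u} \<le> card {u \<in> V. R w u}"
        using psubset.hyps by (intro card_mono) (auto simp: W_def)
      also have "\<dots> \<le> D"
        using that psubset.prems by (simp add: W_def)
      finally show ?thesis .
    qed
    have "W \<subset> V"
      using \<open>v \<in> V\<close> by (auto simp: W_def N_def)
    from psubset.IH[OF this W_degree] obtain C where C: "C \<subseteq> W" "card W \<le> (D + 1) * card C"
      and indep: "\<forall>x\<in>C. \<forall>z\<in>C. x \<noteq> z \<longrightarrow> \<not> R x z"
      by blast
    have "V = W \<union> N"
      using \<open>v \<in> V\<close> by (auto simp: W_def N_def)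
    then have "card V \<le> card W + card N"
      by (metis card_Un_le)
    moreover have "card N \<le> D + 1"
      using psubset.prems[OF \<open>v \<in> V\<close>] psubset.hyps by (simp add: N_def card_insert_if)
    moreover have "finite C" "v \<notin> C"
      using C(1) psubset.hyps by (auto simp: W_def N_def intro: finite_subset)
    then have "card (insert v C) = card C + 1"
      by simp
    ultimately have "card V \<le> (D + 1) * card (insert v C)"
      using C(2) by (simp add: algebra_simps)
    moreover have "\<not> R v u" "\<not> R u v" if "u \<in> C" for u
      using that C(1) psubset.hyps assms(3) by (auto simp: W_def N_def)
    then have "\<forall>x\<in>insert v C. \<forall>z\<in>insert v C. x \<noteq> z \<longrightarrow> \<not> R x z"
      using indep by blast
    moreover have "insert v C \<subseteq> V"
      using C(1) \<open>v \<in> V\<close> by (auto simp: W_def)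
    ultimately show ?thesis
      by blast
  qed simp
qed

lemma rc_pal_at_periodic:
  assumes inv: "\<forall>a\<in>set y. cmp (cmp a) = a"
    and pal: "rc_pal_at cmp y c k" and pal': "rc_pal_at cmp y (c + d) k"
    and lo: "c - k \<le> p" and hi: "p + d < c + k"
  shows "y ! (p + 2 * d) = y ! p"
proof -
  have "k \<le> c" and len: "c + d + k \<le> length y"
    and refl: "\<And>t. t < k \<Longrightarrow> y ! (c + t) = cmp (y ! (c - 1 - t))"
    and refl': "\<And>t. t < k \<Longrightarrow> y ! (c + d + t) = cmp (y ! (c + d - 1 - t))"
    using pal pal' by (auto simp: rc_pal_at_def)
  have inv_nth: "cmp (cmp (y ! i)) = y ! i" if "i < length y" for i
    using inv that by simp
  have left: "y ! (2 * c - 1 - p) = cmp (y ! p)" if "p < c"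
    using refl[of "c - 1 - p"] that lo \<open>k \<le> c\<close> by (simp add: Suc_diff_Suc numeral_2_eq_2)
  have right: "y ! (p + 2 * d) = cmp (y ! (2 * c - 1 - p))" if "c \<le> p + d"
    using refl'[of "p + d - c"] that hi by (simp add: numeral_2_eq_2 ac_simps)
  consider "p + d < c" | "p < c" "c \<le> p + d" | "c \<le> p"
    by linarith
  then show ?thesis
  proof cases
    case 1
    then have "cmp (y ! p) = cmp (y ! (p + 2 * d))"
      using left refl'[of "c - 1 - p - d"] lo by (simp add: numeral_2_eq_2 ac_simps)
    moreover have "p + 2 * d < length y"
      using 1 len by linarith
    ultimately show ?thesis
      using inv_nth[of p] inv_nth[of "p + 2 * d"] by fastforce
  next
    case 2
    then show ?thesis
      using left right inv_nth[of p] len by simp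
  next
    case 3
    then show ?thesis
      using refl[of "p - c"] right hi by (simp add: numeral_2_eq_2)
  qed
qed

lemma rc_pal_at_periodic_mult:
  assumes inv: "\<forall>a\<in>set y. cmp (cmp a) = a"
    and pal: "rc_pal_at cmp y c k" and pal': "rc_pal_at cmp y (c + d) k"
    and lo: "c - k \<le> p" and hi: "p + j * (2 * d) < c + k + d"
  shows "y ! (p + j * (2 * d)) = y ! p"
  using hi
proof (induction j)
  case (Suc j)
  have "y ! (p + j * (2 * d) + 2 * d) = y ! (p + j * (2 * d))"
    by (rule rc_pal_at_periodic[OF inv pal pal']) (use lo Suc.prems in auto)
  then show ?case
    using Suc by (simp add: ac_simps)
qed simp

lemma rc_pal_at_take_append:
  assumes "rc_pal_at cmp y c k" and "m \<le> k" and "c + m \<le> l" and "l \<le> length y"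
  shows "rc_pal_at cmp (take l y @ w) c m"
  using assms by (auto simp: rc_pal_at_def nth_append)

lemma exists_multiple_between:
  fixes p m :: nat
  assumes "0 < p"
  shows "\<exists>j. m < j * p \<and> j * p \<le> m + p"
proof -
  have "m div p * p + m mod p = m" "m mod p < p"
    by (rule div_mult_mod_eq) (simp add: assms)
  then have "m < (m div p + 1) * p" "(m div p + 1) * p \<le> m + p"
    unfolding distrib_right mult_1 by linarith+
  then show ?thesis
    by blast
qed

lemma not_rc_pal_free_take_append:
  assumes inv: "\<forall>a\<in>set y. cmp (cmp a) = a"
    and pal: "rc_pal_at cmp y c k" and pal': "rc_pal_at cmp y (c + d) k"
    and "0 < d" and "d < m" and "4 * m \<le> k"
  shows "\<not> rc_pal_free cmp m (take c y @ w)"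
proof -
  \<comment> \<open>y is 2d-periodic near c; shifting the factor at c left by a multiple J of the
    period with m < J puts a radius-m copy of it strictly before c, out of the deletion's reach.\<close>
  obtain J j where J: "J = j * (2 * d)" and "m < J" "J \<le> m + 2 * d"
    using exists_multiple_between[of "2 * d" m] \<open>0 < d\<close> by auto
  have "k \<le> c" "c \<le> length y"
    using pal by (auto simp: rc_pal_at_def)
  define e where "e = c - J"
  have shift: "y ! (p + J) = y ! p" if "c - k \<le> p" "p + J < c + k + d" for p
    using rc_pal_at_periodic_mult[OF inv pal pal' that(1), of j] that(2)
    unfolding J by blast
  have "rc_pal_at cmp (take c y @ w) e m"
    unfolding rc_pal_at_def
  proof (intro conjI allI impI)
    show "m \<le> e" "e + m \<le> length (take c y @ w)"
      using \<open>m < J\<close> \<open>J \<le> m + 2 * d\<close> \<open>d < m\<close> \<open>4 * m \<le> k\<close> \<open>k \<le> c\<close> \<open>c \<le> length y\<close>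
      by (auto simp: e_def)
    fix t
    assume "t < m"
    have idx: "e + t + J = c + t" "e - 1 - t + J = c - 1 - t" "e + t < c" "e - 1 - t < c"
      using \<open>t < m\<close> \<open>m < J\<close> \<open>J \<le> m + 2 * d\<close> \<open>d < m\<close> \<open>4 * m \<le> k\<close> \<open>k \<le> c\<close>
      by (auto simp: e_def)
    have "y ! (e + t) = y ! (c + t)"
      using shift[of "e + t"] idx \<open>t < m\<close> \<open>J \<le> m + 2 * d\<close> \<open>d < m\<close> \<open>4 * m \<le> k\<close>
      by (simp add: e_def)
    also have "\<dots> = cmp (y ! (c - 1 - t))"
      using pal \<open>t < m\<close> \<open>4 * m \<le> k\<close> by (simp add: rc_pal_at_def)
    also have "y ! (c - 1 - t) = y ! (e - 1 - t)"
      using shift[of "e - 1 - t"] idx \<open>t < m\<close> \<open>J \<le> m + 2 * d\<close> \<open>d < m\<close> \<open>4 * m \<le> k\<close>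
      by (simp add: e_def)
    finally show "(take c y @ w) ! (e + t) = cmp ((take c y @ w) ! (e - 1 - t))"
      using idx \<open>c \<le> length y\<close> by (simp add: nth_append)
  qed
  then show ?thesis
    by (auto simp: rc_pal_free_def)
qed

lemma not_both_rc_pal_free_deletions:
  assumes inv: "\<forall>a\<in>set y. cmp (cmp a) = a"
    and pal: "rc_pal_at cmp y c k" and pal': "rc_pal_at cmp y c' k"
    and "c < c'" and "4 * m \<le> k"
  shows "\<not> (rc_pal_free cmp m (take c y @ drop (c + k) y) \<and> rc_pal_free cmp m (take c' y @ drop (c' + k) y))"
proof (cases "c + m \<le> c'")
  case True
  have "c' \<le> length y"
    using pal' by (simp add: rc_pal_at_def)
  then have "rc_pal_at cmp (take c' y @ drop (c' + k) y) c m"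
    using rc_pal_at_take_append[OF pal] True \<open>4 * m \<le> k\<close> by simp
  then show ?thesis
    by (auto simp: rc_pal_free_def)
next
  case False
  with pal' \<open>c < c'\<close> have "rc_pal_at cmp y (c + (c' - c)) k" "0 < c' - c" "c' - c < m"
    by simp_all
  then show ?thesis
    using not_rc_pal_free_take_append[OF inv pal _ _ _ \<open>4 * m \<le> k\<close>] by blast
qed

lemma RC_dup_Suc:
  "RC_dup cmp k (Suc a) x = take a x @ take k (drop a x) @ rc cmp (take k (drop a x)) @ drop (a + k) x"
  by (simp add: RC_dup_def Let_def)

lemma RC_ball_eq: "RC_ball cmp k x = {RC_dup cmp k (Suc a) x | a. a + k \<le> length x}"
proof (cases "k \<le> length x")
  case True
  have "{RC_dup cmp k i x | i. 1 \<le> i \<and> i \<le> length x - k + 1} =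
        {RC_dup cmp k (Suc a) x | a. a + k \<le> length x}" (is "?L = ?R")
  proof
    show "?L \<subseteq> ?R"
    proof
      fix y
      assume "y \<in> ?L"
      then obtain i where "y = RC_dup cmp k i x" "1 \<le> i" "i \<le> length x - k + 1"
        by blast
      then show "y \<in> ?R"
        using True by (intro CollectI exI[of _ "i - 1"]) auto
    qed
    show "?R \<subseteq> ?L"
    proof
      fix y
      assume "y \<in> ?R"
      then obtain a where "y = RC_dup cmp k (Suc a) x" "a + k \<le> length x"
        by blast
      then show "y \<in> ?L"
        by (intro CollectI exI[of _ "Suc a"]) auto
    qed
  qed
  with True show ?thesis
    by (simp add: RC_ball_def)
qed (auto simp: RC_ball_def)

lemma involutive_on_RC_dup:
  assumes "\<forall>a\<in>set x. cmp (cmp a) = a"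
  shows "\<forall>a\<in>set (RC_dup cmp k i x). cmp (cmp a) = a"
  using assms by (auto simp: RC_dup_def rc_def Let_def dest!: in_set_takeD in_set_dropD)

context
  fixes cmp :: "nat \<Rightarrow> nat" and k a :: nat and x :: "nat list"
  assumes fits: "a + k \<le> length x"
begin

lemma rc_pal_at_RC_dup: "rc_pal_at cmp (RC_dup cmp k (Suc a) x) (a + k) k"
  using fits by (simp add: rc_pal_at_iff_take_drop RC_dup_Suc rc_def)

lemma delete_RC_dup:
  "take (a + k) (RC_dup cmp k (Suc a) x) @ drop (a + k + k) (RC_dup cmp k (Suc a) x) = x"
  using fits by (simp add: RC_dup_Suc rc_def) (metis append.assoc append_take_drop_id take_add)

end

lemma RC_dup_eq_imp_eq:
  assumes inv: "\<forall>a\<in>set x. cmp (cmp a) = a"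
    and free: "rc_pal_free cmp m x" "rc_pal_free cmp m u" and "4 * m \<le> k"
    and fits: "a + k \<le> length x" "b + k \<le> length u"
    and eq: "RC_dup cmp k (Suc a) x = RC_dup cmp k (Suc b) u"
  shows "x = u"
proof -
  define y where "y = RC_dup cmp k (Suc a) x"
  have inv_y: "\<forall>a\<in>set y. cmp (cmp a) = a"
    using involutive_on_RC_dup[OF inv] by (simp add: y_def)
  have pal: "rc_pal_at cmp y (a + k) k" "rc_pal_at cmp y (b + k) k"
    unfolding y_def by (rule rc_pal_at_RC_dup[OF fits(1)]) (unfold eq, rule rc_pal_at_RC_dup[OF fits(2)])
  have del: "take (a + k) y @ drop (a + k + k) y = x" "take (b + k) y @ drop (b + k + k) y = u"
    unfolding y_def by (rule delete_RC_dup[OF fits(1)]) (unfold eq, rule delete_RC_dup[OF fits(2)])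
  have "\<not> a < b" "\<not> b < a"
    using not_both_rc_pal_free_deletions[OF inv_y pal(1,2) _ \<open>4 * m \<le> k\<close>]
      not_both_rc_pal_free_deletions[OF inv_y pal(2,1) _ \<open>4 * m \<le> k\<close>] free del
    by auto
  then show ?thesis
    using del by simp
qed

lemma RC_ball_disjoint:
  assumes "\<forall>a\<in>set x. cmp (cmp a) = a"
    and "rc_pal_free cmp m x" "rc_pal_free cmp m u" and "4 * m \<le> k" and "x \<noteq> u"
  shows "RC_ball cmp k x \<inter> RC_ball cmp k u = {}"
  using RC_dup_eq_imp_eq[OF assms(1-4)] \<open>x \<noteq> u\<close> by (force simp: RC_ball_eq)

definition confusable :: "(nat \<Rightarrow> nat) \<Rightarrow> nat list \<Rightarrow> nat list \<Rightarrow> bool" where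
  "confusable cmp x z \<longleftrightarrow> x \<noteq> z \<and> (\<exists>k\<ge>1. RC_ball cmp k x \<inter> RC_ball cmp k z \<noteq> {})"

lemma confusable_sym: "confusable cmp x z \<Longrightarrow> confusable cmp z x"
  by (auto simp: confusable_def)

lemma card_confusable_le:
  assumes inv: "\<forall>a\<in>set x. cmp (cmp a) = a" and free: "rc_pal_free cmp m x"
    and S: "\<forall>u\<in>S. length u = length x \<and> rc_pal_free cmp m u"
  shows "card {u \<in> S. confusable cmp x u} \<le> 4 * m * length x ^ 2"
proof -
  let ?n = "length x"
  let ?recover = "\<lambda>(k, a, b).
    take (b + k) (RC_dup cmp k (Suc a) x) @ drop (b + k + k) (RC_dup cmp k (Suc a) x)"
  have "{u \<in> S. confusable cmp x u} \<subseteq> ?recover ` ({..<4 * m} \<times> {..<?n} \<times> {..<?n})"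
  proof
    fix u
    assume "u \<in> {u \<in> S. confusable cmp x u}"
    then obtain k where u: "u \<in> S" "x \<noteq> u" and "1 \<le> k" "RC_ball cmp k x \<inter> RC_ball cmp k u \<noteq> {}"
      by (auto simp: confusable_def)
    moreover from this obtain a b where ab: "a + k \<le> ?n" "b + k \<le> ?n"
      "RC_dup cmp k (Suc a) x = RC_dup cmp k (Suc b) u"
      using S by (auto simp: RC_ball_eq)
    ultimately have "k < 4 * m"
      using RC_ball_disjoint[OF inv free, of u k] S by (meson not_le)
    moreover have "u = ?recover (k, a, b)"
      using delete_RC_dup[of b k u] ab u S by simp
    ultimately show "u \<in> ?recover ` ({..<4 * m} \<times> {..<?n} \<times> {..<?n})"
      using ab \<open>1 \<le> k\<close> by force
  qed
  then have "card {u \<in> S. confusable cmp x u} \<le> card ({..<4 * m} \<times> {..<?n} \<times> {..<?n})"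
    by (meson card_image_le card_mono finite_SigmaI finite_imageI finite_lessThan order_trans)
  then show ?thesis
    by (simp add: power2_eq_square)
qed

lemma card_rc_pal_free_ge:
  assumes "2 * (n + 1) \<le> q ^ m"
  shows "q ^ n \<le> 2 * card {x \<in> words q n. rc_pal_free cmp m x}"
proof -
  let ?S = "{x \<in> words q n. rc_pal_free cmp m x}"
  let ?B = "{x \<in> words q n. \<not> rc_pal_free cmp m x}"
  have "card (?S \<union> ?B) = card ?S + card ?B"
    by (rule card_Un_disjoint) (auto simp: finite_words)
  moreover have "?S \<union> ?B = words q n"
    by blast
  moreover have "2 * card ?B \<le> q ^ n"
  proof -
    have "q ^ m * (2 * card ?B) \<le> 2 * (n + 1) * q ^ n"
      using card_not_rc_pal_free[of q m n cmp] by simp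
    also have "\<dots> \<le> q ^ m * q ^ n"
      using assms by (rule mult_le_mono1)
    finally have "q ^ m * (2 * card ?B) \<le> q ^ m * q ^ n" .
    moreover have "0 < q ^ m"
      using less_le_trans[of 0 "2 * (n + 1)" "q ^ m"] assms by simp
    ultimately show ?thesis
      using nat_mult_le_cancel1 by blast
  qed
  ultimately show ?thesis
    by (simp add: card_words)
qed

lemma exists_RC_dup_code:
  assumes inv: "\<forall>a<q. cmp (cmp a) = a" and qm: "2 * (n + 1) \<le> q ^ m"
  shows "\<exists>C\<subseteq>words q n. corrects_RC_dup cmp C \<and> q ^ n \<le> 2 * (4 * m * n ^ 2 + 1) * card C"
proof -
  let ?S = "{x \<in> words q n. rc_pal_free cmp m x}"
  have degree: "card {u \<in> ?S. confusable cmp x u} \<le> 4 * m * n ^ 2" if "x \<in> ?S" for x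
  proof -
    have "\<forall>a\<in>set x. cmp (cmp a) = a" "rc_pal_free cmp m x" "length x = n"
      using inv that by (auto simp: words_def)
    then show ?thesis
      using card_confusable_le[of x cmp m ?S] by (simp add: words_def)
  qed
  obtain C where C: "C \<subseteq> ?S" "card ?S \<le> (4 * m * n ^ 2 + 1) * card C"
    and indep: "\<forall>x\<in>C. \<forall>z\<in>C. x \<noteq> z \<longrightarrow> \<not> confusable cmp x z"
    using exists_large_independent_subset[of ?S "confusable cmp", OF _ degree confusable_sym]
    by (auto simp: finite_words)
  have "corrects_RC_dup cmp C"
    using indep by (auto simp: corrects_RC_dup_def confusable_def)
  moreover have "q ^ n \<le> 2 * (4 * m * n ^ 2 + 1) * card C"
    using card_rc_pal_free_ge[OF qm, of cmp] C(2) by simp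
  ultimately show ?thesis
    using C(1) by blast
qed

lemma exists_power_between:
  fixes q n :: nat
  assumes "2 \<le> q" and "q \<le> n"
  shows "\<exists>m. 2 * (n + 1) \<le> q ^ m \<and> q ^ m \<le> n ^ 4"
proof -
  define m where "m = (LEAST m. 2 * (n + 1) \<le> q ^ m)"
  have "2 * (n + 1) < 2 ^ (2 * (n + 1))"
    by (rule less_exp)
  also have "\<dots> \<le> q ^ (2 * (n + 1))"
    using assms(1) by (rule power_mono) simp
  finally have "2 * (n + 1) \<le> q ^ (2 * (n + 1))"
    by simp
  then have m: "2 * (n + 1) \<le> q ^ m"
    unfolding m_def by (rule LeastI)
  then obtain m' where m': "m = Suc m'"
    by (cases m) auto
  then have "q ^ m' < 2 * (n + 1)"
    unfolding m_def by (metis lessI not_le not_less_Least)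
  also have "2 * (n + 1) \<le> n ^ 3"
  proof -
    have "2 * (n + 1) \<le> 2 * 2 * n"
      using assms by simp
    also have "\<dots> \<le> n * n * n"
      using assms by (intro mult_le_mono) auto
    finally show ?thesis
      by (simp add: power3_eq_cube)
  qed
  finally have "q ^ m \<le> n * n ^ 3"
    using assms(2) m' by (simp add: mult_le_mono)
  then show ?thesis
    using m by (auto simp: power_Suc[symmetric] simp del: power_Suc)
qed

lemma log_redundancy_le:
  assumes "1 < real q" and "q \<le> n" and "0 < m" and "0 < N"
    and "q ^ m \<le> n ^ 4" and "q ^ n \<le> 10 * m * n ^ 2 * N"
  shows "real n - log q N \<le> 2 * log q n + log q (log q n) + log q 40"
proof -
  have "0 < n" "1 \<le> log q n"
    using assms(1,2) by simp_all
  have "real (q ^ n) \<le> real (10 * m * n ^ 2 * N)"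
    using assms(6) by (simp only: of_nat_le_iff)
  then have "real q ^ n \<le> 10 * real m * real n ^ 2 * real N"
    by (simp only: of_nat_mult of_nat_power of_nat_numeral)
  then have "log q (real q ^ n) \<le> log q (10 * real m * real n ^ 2 * real N)"
    using assms(1) by (intro log_mono) simp_all
  then have "real n \<le> log q (10 * real m * real n ^ 2 * real N)"
    using assms(1) by simp
  also have "\<dots> = log q 10 + log q m + 2 * log q n + log q N"
    using \<open>0 < m\<close> \<open>0 < n\<close> \<open>0 < N\<close> by (simp add: log_mult_pos log_nat_power)
  finally have n_le: "real n \<le> log q 10 + log q m + 2 * log q n + log q N" .
  have "real q ^ m \<le> real n ^ 4"
    using assms(5) by (simp only: of_nat_le_iff flip: of_nat_power)
  then have "log q (real q ^ m) \<le> log q (real n ^ 4)"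
    using assms(1) by (intro log_mono) simp_all
  then have "real m \<le> 4 * log q n"
    using assms(1) by (simp add: log_nat_power)
  then have "log q m \<le> log q 4 + log q (log q n)"
    using assms(1) \<open>0 < m\<close> \<open>1 \<le> log q n\<close> by (simp flip: log_mult_pos)
  moreover have "log q 40 = log q 10 + log q 4"
    by (simp flip: log_mult_pos)
  ultimately show ?thesis
    using n_le by linarith
qed

lemma exists_RC_dup_code_redundancy:
  assumes "2 \<le> q" and "q \<le> n" and inv: "\<forall>a<q. cmp (cmp a) = a"
  shows "\<exists>C\<subseteq>words q n. C \<noteq> {} \<and> corrects_RC_dup cmp C \<and>
           real n - log q (card C) \<le> 2 * log q n + log q (log q n) + log q 40"
proof -
  obtain m where qm: "2 * (n + 1) \<le> q ^ m" "q ^ m \<le> n ^ 4"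
    using exists_power_between[OF assms(1,2)] by blast
  obtain C where C: "C \<subseteq> words q n" "corrects_RC_dup cmp C"
    and size: "q ^ n \<le> 2 * (4 * m * n ^ 2 + 1) * card C"
    using exists_RC_dup_code[OF inv qm(1)] by blast
  have "0 < m" "0 < n"
    using qm(1) assms(1,2) by (cases m; simp)+
  have "0 < card C"
    using size assms(1) by (cases "card C") auto
  have "1 \<le> m * n ^ 2"
    using \<open>0 < m\<close> \<open>0 < n\<close> by simp
  then have "2 * (4 * m * n ^ 2 + 1) \<le> 10 * m * n ^ 2"
    by (simp add: mult.assoc)
  with size have "q ^ n \<le> 10 * m * n ^ 2 * card C"
    by (meson mult_le_mono1 order_trans)
  moreover have "1 < real q"
    using assms(1) by simp
  ultimately have "real n - log q (card C) \<le> 2 * log q n + log q (log q n) + log q 40"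
    using log_redundancy_le[OF _ assms(2) \<open>0 < m\<close> \<open>0 < card C\<close> qm(2)] by blast
  moreover have "C \<noteq> {}"
    using \<open>0 < card C\<close> by auto
  ultimately show ?thesis
    using C by blast
qed

lemma log_card_le_length:
  assumes "1 < real q" and "C \<subseteq> words q n" and "C \<noteq> {}"
  shows "log q (card C) \<le> n"
proof -
  have "0 < card C"
    using assms(2,3) finite_subset[OF _ finite_words] by (simp add: card_gt_0_iff)
  have "card C \<le> q ^ n"
    using card_mono[OF finite_words assms(2)] by (simp add: card_words)
  then have "real (card C) \<le> real q ^ n"
    by (simp only: of_nat_le_iff flip: of_nat_power)
  with \<open>0 < card C\<close> have "log q (card C) \<le> log q (real q ^ n)"
    by (intro log_mono[OF assms(1)]) simp_all
  with assms(1) show ?thesis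
    by simp
qed

lemma rate_tendsto_one:
  fixes r g :: "nat \<Rightarrow> real"
  assumes "\<forall>\<^sub>F n in sequentially. real n - g n \<le> r n \<and> r n \<le> real n"
    and "(\<lambda>n. g n / real n) \<longlonglongrightarrow> 0"
  shows "(\<lambda>n. r n / real n) \<longlonglongrightarrow> 1"
proof (rule tendsto_sandwich)
  show "\<forall>\<^sub>F n in sequentially. 1 - g n / real n \<le> r n / real n"
    using assms(1) eventually_gt_at_top[of 0]
  proof eventually_elim
    case (elim n)
    then have "(real n - g n) / real n \<le> r n / real n"
      by (intro divide_right_mono) auto
    with elim show ?case
      by (simp add: diff_divide_distrib)
  qed
  show "\<forall>\<^sub>F n in sequentially. r n / real n \<le> 1"
    using assms(1) eventually_gt_at_top[of 0] by eventually_elim simp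
  show "(\<lambda>n. 1 - g n / real n) \<longlonglongrightarrow> 1"
    using tendsto_diff[OF tendsto_const assms(2), of 1] by simp
qed simp

theorem theorem3:
  fixes q :: nat and cmp :: "nat \<Rightarrow> nat"
  assumes "q \<ge> 2" and "even q" and "complement_op q cmp"
  shows "\<exists>(c::real) (C :: nat \<Rightarrow> nat list set).
           (\<forall>n\<ge>q. C n \<subseteq> words q n \<and> C n \<noteq> {} \<and> corrects_RC_dup cmp (C n) \<and>
               real n - log q (card (C n)) \<le> 2 * log q n + log q (log q n) + c)
         \<and> ((\<lambda>n. log q (card (C n)) / real n) \<longlonglongrightarrow> 1)"
proof -
  have inv: "\<forall>a<q. cmp (cmp a) = a"
    using assms(3) by (simp add: complement_op_def)
  define g where "g n = 2 * log q n + log q (log q n) + log q 40" for n :: nat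
  have "\<forall>n. \<exists>C. q \<le> n \<longrightarrow> C \<subseteq> words q n \<and> C \<noteq> {} \<and> corrects_RC_dup cmp C \<and>
      real n - log q (card C) \<le> g n"
    using exists_RC_dup_code_redundancy[OF assms(1) _ inv] unfolding g_def by blast
  then obtain C where C: "\<forall>n\<ge>q. C n \<subseteq> words q n \<and> C n \<noteq> {} \<and> corrects_RC_dup cmp (C n) \<and>
      real n - log q (card (C n)) \<le> g n"
    by metis
  have "(\<lambda>n. g n / real n) \<longlonglongrightarrow> 0"
    using assms(1) unfolding g_def log_def by real_asymp
  moreover have "\<forall>\<^sub>F n in sequentially. real n - g n \<le> log q (card (C n)) \<and> log q (card (C n)) \<le> real n"
    using eventually_ge_at_top[of q] by eventually_elim (use C assms(1) log_card_le_length in force)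
  ultimately have "(\<lambda>n. log q (card (C n)) / real n) \<longlonglongrightarrow> 1"
    by (rule rate_tendsto_one[rotated])
  with C show ?thesis
    unfolding g_def by (intro exI[of _ "log q 40"] exI[of _ C]) simp
qed

end
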